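(* Let $D$ be an integral domain with quotient field $K$, $n\ge1$, and $C\in M_n(D)$. Then $$\{f(C)\mid f\in \mathrm{Int}_K(M_n(D))\}=D[C],$$ where $D[C]=\{f(C)\mid f\in D[x]\}$.
   Context: $M_n(D)$ is the ring of $n\times n$ matrices over $D$; $\mathrm{Int}_K(M_n(D))=\{f\in K[x]\mid f(C)\in M_n(D)\text{ for all }C\in M_n(D)\}$, with $f(C)$ computed in $M_n(K)$. *)

theory Defs
  imports "HOL-Analysis.Analysis" "HOL-Computational_Algebra.Polynomial_Factorial"
begin

text \<open>Square matrices over a commutative ring are modelled as 'a^'n^'n (n = CARD('n) \<ge> 1).
  Powers use the matrix product **, and f(C) = sum of coeff f i * C^i.\<close>

primrec mat_pow :: "('a::comm_ring_1)^('n::finite)^'n \<Rightarrow> nat \<Rightarrow> 'a^'n^'n" where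
  "mat_pow A 0 = mat 1"
| "mat_pow A (Suc k) = A ** mat_pow A k"

definition mat_smult :: "'a::comm_ring_1 \<Rightarrow> 'a^('n::finite)^'n \<Rightarrow> 'a^'n^'n" where
  "mat_smult c A = (\<chi> i j. c * A $ i $ j)"

definition poly_mat :: "'a::comm_ring_1 poly \<Rightarrow> 'a^('n::finite)^'n \<Rightarrow> 'a^'n^'n" where
  "poly_mat p A = (\<Sum>i\<le>degree p. mat_smult (coeff p i) (mat_pow A i))"

text \<open>Entrywise image of a matrix over D in M_n(K), K = 'a fract the quotient field.\<close>
definition mat_to_fract :: "('a::idom)^('n::finite)^'n \<Rightarrow> 'a fract^'n^'n" where
  "mat_to_fract A = (\<chi> i j. to_fract (A $ i $ j))"

definition Int_mat :: "('n::finite) itself \<Rightarrow> 'a::idom fract poly set" where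
  "Int_mat (_::'n itself) = {f. \<forall>C::'a^'n^'n. \<exists>M::'a^'n^'n. poly_mat f (mat_to_fract C) = mat_to_fract M}"

end

theory Submission
  imports Defs "Jordan_Normal_Form.Char_Poly"
begin

(*
  The inclusion
  D[C] \<subseteq> {f(C) | f \<in> Int_K(M_n(D))} is immediate, since D[x] \<subseteq> Int_K(M_n(D)).

  (1) Cayley-Hamilton: C is annihilated by a monic polynomial p \<in> D[x] of degree n (its
      characteristic polynomial).  Dividing by p in K[x] gives f(C) = r(C) with
      r = f mod p, deg r < n.
  (2) The companion matrix Cm of p lies in M_n(D), has the cyclic vector e_0
      (Cm^k e_0 = e_k for k < n) and satisfies p(Cm) e_0 = 0.  Hence the first column of
      f(Cm) equals r(Cm) e_0 = \<Sum>_{k<n} r_k e_k, i.e. it is the coefficient vector of r.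
  (3) Since f(Cm) \<in> M_n(D), all coefficients of r lie in D, so f(C) = r(C) \<in> D[C].
*)

text \<open>The Jordan_Normal_Form library overloads $ for its own vectors; here $ is always the
  component of a Cartesian vector.  cI is the identity matrix.\<close>

no_notation Matrix.vec_index (infixl "$" 100)

abbreviation cI :: "'a::comm_ring_1^('n::finite)^'n" where
  "cI \<equiv> Finite_Cartesian_Product.mat 1"

lemma cmat_eqI: "(\<And>i j. A $ i $ j = B $ i $ j) \<Longrightarrow> A = (B::'a^'n^'m)"
  by (simp add: Finite_Cartesian_Product.vec_eq_iff)

section \<open>Evaluating polynomials at matrices\<close>

lemma cmul_add_left: "((A::'a::comm_ring_1^'n::finite^'n) + B) ** C = A ** C + B ** C"
  by (rule cmat_eqI) (simp add: matrix_matrix_mult_def sum.distrib distrib_right)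

lemma cmul_diff_right: "(A::'a::comm_ring_1^'n::finite^'n) ** (B - C) = A ** B - A ** C"
  by (rule cmat_eqI) (simp add: matrix_matrix_mult_def sum_subtractf right_diff_distrib)

lemma cmul_sum_right:
  "finite S \<Longrightarrow> (A::'a::comm_ring_1^'n::finite^'n) ** (\<Sum>i\<in>S. F i) = (\<Sum>i\<in>S. A ** F i)"
  by (induction S rule: finite_induct) (auto simp: matrix_add_ldistrib)

lemma mat_smult_0 [simp]: "mat_smult 0 A = 0"
  by (rule cmat_eqI) (simp add: mat_smult_def)

lemma mat_smult_0_right [simp]: "mat_smult a 0 = 0"
  by (rule cmat_eqI) (simp add: mat_smult_def)

lemma mat_smult_add_left: "mat_smult (a + b) A = mat_smult a A + mat_smult b A"
  by (rule cmat_eqI) (simp add: mat_smult_def distrib_right)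

lemma mat_smult_add_right: "mat_smult a (A + B) = mat_smult a A + mat_smult a B"
  by (rule cmat_eqI) (simp add: mat_smult_def distrib_left)

lemma mat_smult_smult: "mat_smult a (mat_smult b A) = mat_smult (a * b) A"
  by (rule cmat_eqI) (simp add: mat_smult_def mult.assoc)

lemma mat_smult_sum: "finite S \<Longrightarrow> mat_smult a (\<Sum>i\<in>S. F i) = (\<Sum>i\<in>S. mat_smult a (F i))"
  by (induction S rule: finite_induct) (auto simp: mat_smult_add_right)

lemma mat_smult_mul_right:
  "mat_smult c (A ** (B::'a::comm_ring_1^'n::finite^'n)) = A ** mat_smult c B"
  by (rule cmat_eqI) (simp add: mat_smult_def matrix_matrix_mult_def sum_distrib_left algebra_simps)

lemma mat_smult_mul_left:
  "mat_smult c ((A::'a::comm_ring_1^'n::finite^'n) ** B) = mat_smult c A ** B"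
  by (rule cmat_eqI) (simp add: mat_smult_def matrix_matrix_mult_def sum_distrib_left algebra_simps)

lemma mat_smult_identity_mul: "mat_smult c cI ** (B::'a::comm_ring_1^'n::finite^'n) = mat_smult c B"
  by (metis matrix_mul_lid mat_smult_mul_left)

lemma mat_smult_as_product: "mat_smult c (B::'a::comm_ring_1^'n::finite^'n) = B ** mat_smult c cI"
  by (metis matrix_mul_rid mat_smult_mul_right)

lemma mat_pow_Suc_right: "mat_pow A (Suc k) = mat_pow A k ** A"
  by (induction k) (simp_all add: matrix_mul_assoc)

lemma poly_mat_ext:
  assumes "degree p < N"
  shows "poly_mat p A = (\<Sum>i<N. mat_smult (coeff p i) (mat_pow A i))"
  unfolding poly_mat_def
  by (rule sum.mono_neutral_left) (use assms in \<open>auto simp: coeff_eq_0\<close>)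

lemma poly_mat_0 [simp]: "poly_mat 0 A = 0"
  by (simp add: poly_mat_def)

lemma poly_mat_pCons: "poly_mat (pCons a p) A = mat_smult a cI + A ** poly_mat p A"
proof -
  define N where "N = Suc (degree p)"
  have dN: "degree p < N" unfolding N_def by simp
  have "degree (pCons a p) < Suc N" using degree_pCons_le[of a p] unfolding N_def by linarith
  then have "poly_mat (pCons a p) A = (\<Sum>i<Suc N. mat_smult (coeff (pCons a p) i) (mat_pow A i))"
    by (rule poly_mat_ext)
  also have "\<dots> = mat_smult a cI + (\<Sum>i<N. mat_smult (coeff p i) (A ** mat_pow A i))"
    by (subst sum.lessThan_Suc_shift) simp
  also have "(\<Sum>i<N. mat_smult (coeff p i) (A ** mat_pow A i)) = A ** poly_mat p A"
    by (simp add: poly_mat_ext[of p N, OF dN] cmul_sum_right mat_smult_mul_right)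
  finally show ?thesis .
qed

lemma poly_mat_add: "poly_mat (p + q) A = poly_mat p A + poly_mat q A"
proof -
  define N where "N = Suc (max (degree p) (degree q))"
  have "degree (p + q) < N" using degree_add_le_max[of p q] unfolding N_def by linarith
  then show ?thesis
    by (simp add: poly_mat_ext[of _ N] N_def mat_smult_add_left sum.distrib)
qed

lemma poly_mat_smult: "poly_mat (Polynomial.smult a p) A = mat_smult a (poly_mat p A)"
proof -
  define N where "N = Suc (degree p)"
  have dN: "degree p < N" unfolding N_def by simp
  have "degree (Polynomial.smult a p) < N" using degree_smult_le[of a p] unfolding N_def by linarith
  then show ?thesis
    by (simp add: poly_mat_ext[of _ N] poly_mat_ext[OF dN] mat_smult_sum mat_smult_smult)
qed

lemma poly_mat_mult: "poly_mat (p * q) A = poly_mat p A ** poly_mat q A"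
proof (induction p rule: pCons_induct)
  case 0
  then show ?case by simp
next
  case (pCons a p)
  have "poly_mat (pCons a p * q) A = poly_mat (Polynomial.smult a q + pCons 0 (p * q)) A"
    by simp
  also have "\<dots> = mat_smult a (poly_mat q A) + A ** (poly_mat p A ** poly_mat q A)"
    by (simp add: poly_mat_add poly_mat_smult poly_mat_pCons pCons.IH)
  also have "\<dots> = poly_mat (pCons a p) A ** poly_mat q A"
    by (simp add: poly_mat_pCons cmul_add_left mat_smult_identity_mul matrix_mul_assoc)
  finally show ?case .
qed

text \<open>Euclidean division transported to matrices: if p(A) = 0 then f(A) = (f mod p)(A).\<close>

lemma poly_mat_div_mod:
  fixes f p :: "'a::field poly"
  shows "poly_mat f A = poly_mat (f div p) A ** poly_mat p A + poly_mat (f mod p) A"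
  by (metis div_mult_mod_eq poly_mat_add poly_mat_mult)

lemma sum_mulv: "finite S \<Longrightarrow> (\<Sum>i\<in>S. F i) *v (v::'a::comm_ring_1^'n::finite) = (\<Sum>i\<in>S. F i *v v)"
  by (induction S rule: finite_induct) (auto simp: matrix_vector_mult_add_rdistrib)

lemma mat_smult_mulv: "mat_smult c A *v (v::'a::comm_ring_1^'n::finite) = c *s (A *v v)"
  by (simp add: Finite_Cartesian_Product.vec_eq_iff mat_smult_def matrix_vector_mult_def
      sum_distrib_left mult.assoc)

lemma poly_mat_mulv:
  assumes "degree p < N"
  shows "poly_mat p A *v v = (\<Sum>k<N. coeff p k *s (mat_pow A k *v v))"
  by (simp add: poly_mat_ext[OF assms] sum_mulv mat_smult_mulv del: mat_pow.simps)

section \<open>Passing from D to its fraction field\<close>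

definition vec_to_fract :: "'a::idom^'n::finite \<Rightarrow> 'a fract^'n" where
  "vec_to_fract v = (\<chi> i. to_fract (v $ i))"

lemma mat_to_fract_mul: "mat_to_fract (A ** B) = mat_to_fract A ** mat_to_fract B"
  by (rule cmat_eqI) (simp add: mat_to_fract_def matrix_matrix_mult_def)

lemma mat_to_fract_0 [simp]: "mat_to_fract 0 = 0"
  by (rule cmat_eqI) (simp add: mat_to_fract_def)

lemma mat_to_fract_identity: "mat_to_fract (cI::'a::idom^'n::finite^'n) = cI"
  by (rule cmat_eqI) (simp add: mat_to_fract_def Finite_Cartesian_Product.mat_def)

lemma mat_to_fract_pow: "mat_to_fract (mat_pow A k) = mat_pow (mat_to_fract A) k"
  by (induction k) (simp_all add: mat_to_fract_identity mat_to_fract_mul)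

lemma mat_to_fract_sum: "finite S \<Longrightarrow> mat_to_fract (\<Sum>i\<in>S. F i) = (\<Sum>i\<in>S. mat_to_fract (F i))"
  by (induction S rule: finite_induct)
    (auto intro!: cmat_eqI simp: mat_to_fract_def)

lemma mat_to_fract_smult: "mat_to_fract (mat_smult c A) = mat_smult (to_fract c) (mat_to_fract A)"
  by (rule cmat_eqI) (simp add: mat_to_fract_def mat_smult_def)

lemma mat_to_fract_mulv: "mat_to_fract A *v vec_to_fract v = vec_to_fract (A *v v)"
  by (simp add: Finite_Cartesian_Product.vec_eq_iff mat_to_fract_def vec_to_fract_def
      matrix_vector_mult_def)

lemma poly_mat_to_fract:
  "poly_mat (map_poly to_fract p) (mat_to_fract A) = mat_to_fract (poly_mat p A)"
proof -
  define N where "N = Suc (degree p)"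
  have dN: "degree p < N" unfolding N_def by simp
  have "degree (map_poly to_fract p) < N" using degree_map_poly_le[of to_fract p] N_def by simp
  then show ?thesis
    by (simp add: poly_mat_ext[of _ N] poly_mat_ext[OF dN] mat_to_fract_sum
        mat_to_fract_smult mat_to_fract_pow coeff_map_poly del: mat_pow.simps)
qed

lemma map_to_fract_in_Int_mat: "map_poly to_fract g \<in> Int_mat TYPE('n::finite)"
  unfolding Int_mat_def using poly_mat_to_fract[of g] by blast

lemma poly_from_integral_coeffs:
  fixes r :: "'a::idom fract poly"
  assumes "\<And>k. coeff r k \<in> range to_fract"
  shows "\<exists>r0. r = map_poly to_fract r0"
proof -
  define num :: "'a fract \<Rightarrow> 'a" where "num c = (SOME a. to_fract a = c)" for c
  have num: "to_fract (num (coeff r k)) = coeff r k" for k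
    unfolding num_def using assms[of k] by (metis (mono_tags) imageE someI)
  have "num 0 = 0"
    using num[of "degree r + 1"] by (simp add: coeff_eq_0)
  then have "r = map_poly to_fract (map_poly num r)"
    by (intro poly_eqI) (simp add: coeff_map_poly num)
  then show ?thesis ..
qed

section \<open>The Cayley-Hamilton theorem\<close>

lemma index_enumeration: "\<exists>g::'n::finite \<Rightarrow> nat. bij_betw g UNIV {..<CARD('n)}"
proof -
  obtain h where "bij_betw h {0..<CARD('n)} (UNIV::'n set)"
    using ex_bij_betw_nat_finite[of "UNIV::'n set"] by auto
  then show ?thesis using bij_betw_inv_into by (auto simp: atLeast0LessThan)
qed

lemma enumeration_hits:
  assumes "bij_betw g UNIV {..<N}" and "k < N"
  obtains x where "g x = k"
  using assms by (metis bij_betw_def imageE lessThan_iff)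

text \<open>The adjugate identity (xI - C) adj(xI - C) = \<chi>_C(x) I, transferred from the
  Jordan_Normal_Form library to matrices indexed by a finite type.\<close>

lemma adjugate_identity:
  fixes C :: "'a::comm_ring_1^'n::finite^'n"
  shows "\<exists>cp P. degree cp = CARD('n) \<and> coeff cp CARD('n) = 1 \<and>
     (\<forall>x y. (\<Sum>z\<in>UNIV. ((if x = z then [:0,1:] else 0) + [:- C $ x $ z:]) * P z y)
       = (if x = y then cp else 0))"
proof -
  define n where "n = CARD('n)"
  obtain g :: "'n \<Rightarrow> nat" where gb: "bij_betw g UNIV {..<n}"
    using index_enumeration n_def by blast
  define h where "h = inv_into UNIV g"
  have hg: "h (g x) = x" for x using gb by (simp add: h_def bij_betw_def)
  have g_eq: "g x = g z \<longleftrightarrow> x = z" for x z by (metis hg)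
  have gl: "g x < n" for x using gb by (auto simp: bij_betw_def)
  define A where "A = Matrix.mat n n (\<lambda>(i,j). C $ h i $ h j)"
  have Ac: "A \<in> carrier_mat n n" by (simp add: A_def)
  define PM where "PM = char_poly_matrix A"
  define Adj where "Adj = adj_mat PM"
  have PMc: "PM \<in> carrier_mat n n" using Ac PM_def by simp
  have Adjc: "Adj \<in> carrier_mat n n" using adj_mat(1)[OF PMc] Adj_def by simp
  have PM_Adj: "PM * Adj = char_poly A \<cdot>\<^sub>m 1\<^sub>m n"
    using adj_mat(2)[OF PMc] unfolding char_poly_def PM_def Adj_def by simp
  have "(\<Sum>z\<in>UNIV. ((if x = z then [:0,1:] else 0) + [:- C $ x $ z:]) * Adj $$ (g z, g y))
       = (if x = y then char_poly A else 0)" for x y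
  proof -
    have "(\<Sum>z\<in>UNIV. ((if x = z then [:0,1:] else 0) + [:- C $ x $ z:]) * Adj $$ (g z, g y))
        = (\<Sum>z\<in>UNIV. PM $$ (g x, g z) * Adj $$ (g z, g y))"
      using gl Ac by (intro sum.cong) (auto simp: PM_def char_poly_matrix_def A_def hg g_eq)
    also have "\<dots> = (\<Sum>l<n. PM $$ (g x, l) * Adj $$ (l, g y))"
      by (rule sum.reindex_bij_betw[OF gb])
    also have "\<dots> = (PM * Adj) $$ (g x, g y)"
      using gl PMc Adjc by (simp add: scalar_prod_def atLeast0LessThan)
    also have "\<dots> = (if x = y then char_poly A else 0)"
      using gl PM_Adj by (simp add: g_eq)
    finally show ?thesis .
  qed
  then show ?thesis using degree_monic_char_poly[OF Ac] unfolding n_def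
    by (intro exI[of _ "char_poly A"] exI[of _ "\<lambda>z y. Adj $$ (g z, g y)"]) auto
qed

text \<open>Telescoping argument behind Cayley-Hamilton: if p(x) I = (x I - C) B(x) for a
  matrix polynomial B(x) = \<Sum> B_k x^k, then p(C) = 0.  Comparing coefficients, the
  hypothesis says p_k I = B_{k-1} - C B_k.\<close>

lemma poly_mat_eq_0_by_telescoping:
  fixes C :: "'a::comm_ring_1^'n::finite^'n" and B :: "nat \<Rightarrow> 'a^'n^'n"
  assumes coeffs: "\<And>k. mat_smult (coeff p k) cI = (case k of 0 \<Rightarrow> 0 | Suc j \<Rightarrow> B j) - C ** B k"
    and vanish: "\<And>k. N \<le> k \<Longrightarrow> B k = 0"
  shows "poly_mat p C = 0"
proof -
  define T where "T k = mat_pow C k ** (case k of 0 \<Rightarrow> 0 | Suc j \<Rightarrow> B j)" for k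
  have step: "mat_smult (coeff p k) (mat_pow C k) = T k - T (Suc k)" for k
  proof -
    have "mat_smult (coeff p k) (mat_pow C k) = mat_pow C k ** mat_smult (coeff p k) cI"
      by (rule mat_smult_as_product)
    also have "\<dots> = T k - (mat_pow C k ** C) ** B k"
      by (simp add: coeffs cmul_diff_right matrix_mul_assoc T_def)
    also have "(mat_pow C k ** C) ** B k = T (Suc k)"
      by (simp add: T_def mat_pow_Suc_right del: mat_pow.simps)
    finally show ?thesis .
  qed
  define M where "M = N + degree p"
  have "poly_mat p C = (\<Sum>k<Suc M. mat_smult (coeff p k) (mat_pow C k))"
    by (rule poly_mat_ext) (simp add: M_def)
  also have "\<dots> = (\<Sum>k<Suc M. T k - T (Suc k))" by (simp only: step)
  also have "\<dots> = T 0 - T (Suc M)" by (rule sum_lessThan_telescope')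
  also have "\<dots> = 0" by (simp add: T_def vanish M_def del: mat_pow.simps)
  finally show ?thesis .
qed

theorem cayley_hamilton:
  fixes C :: "'a::comm_ring_1^'n::finite^'n"
  shows "\<exists>p. degree p = CARD('n) \<and> coeff p CARD('n) = 1 \<and> poly_mat p C = 0"
proof -
  obtain p P where monic: "degree p = CARD('n)" "coeff p CARD('n) = 1"
    and adj: "\<And>x y. (\<Sum>z\<in>UNIV. ((if x = z then [:0,1:] else 0) + [:- C $ x $ z:]) * P z y)
       = (if x = y then p else 0)"
    using adjugate_identity[of C] by blast
  define B where "B k = (\<chi> x y. coeff (P x y) k)" for k
  have coeffs: "mat_smult (coeff p k) cI = (case k of 0 \<Rightarrow> 0 | Suc j \<Rightarrow> B j) - C ** B k" for k
  proof (rule cmat_eqI)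
    fix x y
    have "(\<Sum>z\<in>UNIV. ((if x = z then [:0,1:] else 0) + [:- C $ x $ z:]) * P z y)
      = (\<Sum>z\<in>UNIV. (if x = z then [:0,1:] else 0) * P z y) + (\<Sum>z\<in>UNIV. [:- C $ x $ z:] * P z y)"
      by (simp only: distrib_right sum.distrib)
    also have "(\<Sum>z\<in>UNIV. (if x = z then [:0,1:] else 0) * P z y) = pCons 0 (P x y)"
      by (simp add: if_distrib[of "\<lambda>a. a * _"] cong: if_cong)
    also have "(\<Sum>z\<in>UNIV. [:- C $ x $ z:] * P z y) = - (\<Sum>z\<in>UNIV. Polynomial.smult (C $ x $ z) (P z y))"
      by (simp add: sum_negf)
    finally have "(\<Sum>z\<in>UNIV. ((if x = z then [:0,1:] else 0) + [:- C $ x $ z:]) * P z y)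
      = pCons 0 (P x y) - (\<Sum>z\<in>UNIV. Polynomial.smult (C $ x $ z) (P z y))"
      by simp
    then have "coeff (if x = y then p else 0) k
        = coeff (pCons 0 (P x y)) k - (\<Sum>z\<in>UNIV. C $ x $ z * coeff (P z y) k)"
      unfolding adj by (simp add: coeff_sum)
    then show "mat_smult (coeff p k) cI $ x $ y = ((case k of 0 \<Rightarrow> 0 | Suc j \<Rightarrow> B j) - C ** B k) $ x $ y"
      by (cases k) (auto simp: mat_smult_def Finite_Cartesian_Product.mat_def B_def
          matrix_matrix_mult_def)
  qed
  define N where "N = Suc (Max (range (\<lambda>(x, y). degree (P x y))))"
  have "B k = 0" if "N \<le> k" for k
  proof (rule cmat_eqI)
    fix x y
    have "degree (P x y) \<le> Max (range (\<lambda>(x, y). degree (P x y)))"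
      by (rule Max_ge) (auto intro: image_eqI[of _ _ "(x, y)"])
    then show "B k $ x $ y = 0 $ x $ y" using that by (simp add: B_def N_def coeff_eq_0)
  qed
  then show ?thesis using monic poly_mat_eq_0_by_telescoping[OF coeffs] by blast
qed

section \<open>Companion matrices\<close>

text \<open>Fix an enumeration g of the index type by 0, ..., n-1.  The k-th standard basis
  vector e_k and the companion matrix of p with respect to g: it maps e_k to e_(k+1) for
  k < n-1 and its last column is -(p_0, ..., p_(n-1)).\<close>

definition basis_vec :: "('n::finite \<Rightarrow> nat) \<Rightarrow> nat \<Rightarrow> 'a::zero_neq_one^'n" where
  "basis_vec g k = (\<chi> x. if g x = k then 1 else 0)"

definition companion_mat :: "('n::finite \<Rightarrow> nat) \<Rightarrow> 'a::comm_ring_1 poly \<Rightarrow> 'a^'n^'n" where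
  "companion_mat g p =
     (\<chi> i j. if g i = Suc (g j) then 1 else if g j = CARD('n) - 1 then - coeff p (g i) else 0)"

lemma mulv_basis_vec:
  fixes M :: "'a::comm_ring_1^'n::finite^'n"
  assumes "inj g" and "g x = k"
  shows "M *v basis_vec g k = (\<chi> i. M $ i $ x)"
proof -
  have "g j = k \<longleftrightarrow> j = x" for j using assms by (auto dest: injD)
  then show ?thesis
    by (simp add: Finite_Cartesian_Product.vec_eq_iff matrix_vector_mult_def basis_vec_def
        if_distrib cong: if_cong)
qed

lemma basis_vec_combination:
  assumes "\<And>x. g x < N"
  shows "(\<Sum>k<N. c k *s basis_vec g k) = ((\<chi> x. c (g x)) :: 'a::comm_ring_1^'n::finite)"
  using assms by (simp add: Finite_Cartesian_Product.vec_eq_iff basis_vec_def if_distrib cong: if_cong)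

lemma vec_to_fract_basis_vec: "vec_to_fract (basis_vec g k) = basis_vec g k"
  by (simp add: Finite_Cartesian_Product.vec_eq_iff vec_to_fract_def basis_vec_def)

lemma companion_mat_powers:
  assumes g: "bij_betw g UNIV {..<CARD('n::finite)}" and "k < CARD('n)"
  shows "mat_pow (companion_mat g p) k *v basis_vec g 0 = (basis_vec g k :: 'a::comm_ring_1^'n)"
  using \<open>k < CARD('n)\<close>
proof (induction k)
  case 0
  then show ?case by simp
next
  case (Suc k)
  obtain x where x: "g x = k" using enumeration_hits[OF g, of k] Suc.prems by auto
  have "mat_pow (companion_mat g p) (Suc k) *v basis_vec g 0 = companion_mat g p *v basis_vec g k"
    using Suc by (simp add: matrix_vector_mul_assoc[symmetric])
  also have "\<dots> = (\<chi> i. companion_mat g p $ i $ x)"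
    using g x by (intro mulv_basis_vec) (simp_all add: bij_betw_imp_inj_on)
  also have "\<dots> = basis_vec g (Suc k)"
    using x Suc.prems by (auto simp: Finite_Cartesian_Product.vec_eq_iff companion_mat_def basis_vec_def)
  finally show ?case .
qed

lemma companion_mat_annihilates:
  fixes p :: "'a::comm_ring_1 poly"
  assumes g: "bij_betw g UNIV {..<CARD('n::finite)}"
    and deg: "degree p = CARD('n)" and monic: "coeff p CARD('n) = 1"
  shows "poly_mat p (companion_mat g p :: 'a^'n^'n) *v basis_vec g 0 = 0"
proof -
  define n where "n = CARD('n)"
  define Cm :: "'a^'n^'n" where "Cm = companion_mat g p"
  have gl: "g x < n" for x using g by (auto simp: bij_betw_def n_def)
  have n_pos: "n = Suc (n - 1)" by (simp add: n_def)
  obtain x where x: "g x = n - 1" using enumeration_hits[OF g, of "n - 1"] unfolding n_def by fastforce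
  have last: "mat_pow Cm n *v basis_vec g 0 = (\<chi> i. - coeff p (g i))"
  proof -
    have "mat_pow Cm n *v basis_vec g 0 = Cm *v (mat_pow Cm (n - 1) *v basis_vec g 0)"
      by (subst n_pos) (simp add: matrix_vector_mul_assoc)
    also have "\<dots> = Cm *v basis_vec g (n - 1)"
      using companion_mat_powers[OF g, of "n - 1" p] by (simp add: Cm_def n_def)
    also have "\<dots> = (\<chi> i. Cm $ i $ x)"
      using g x by (intro mulv_basis_vec) (simp_all add: bij_betw_imp_inj_on)
    also have "\<dots> = (\<chi> i. - coeff p (g i))"
      using x gl by (auto simp: Finite_Cartesian_Product.vec_eq_iff Cm_def companion_mat_def n_def)
        (metis less_irrefl)
    finally show ?thesis .
  qed
  have "poly_mat p Cm *v basis_vec g 0 = (\<Sum>k<Suc n. coeff p k *s (mat_pow Cm k *v basis_vec g 0))"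
    by (rule poly_mat_mulv) (simp add: deg n_def)
  also have "\<dots> = (\<Sum>k<n. coeff p k *s (mat_pow Cm k *v basis_vec g 0)) + (\<chi> i. - coeff p (g i))"
    using last monic by (simp add: n_def)
  also have "(\<Sum>k<n. coeff p k *s (mat_pow Cm k *v basis_vec g 0)) = (\<Sum>k<n. coeff p k *s basis_vec g k)"
    by (rule sum.cong) (simp_all add: companion_mat_powers[OF g] Cm_def n_def)
  also have "\<dots> = (\<chi> i. coeff p (g i))"
    using gl by (rule basis_vec_combination)
  also have "(\<chi> i. coeff p (g i)) + (\<chi> i. - coeff p (g i)) = 0"
    by (simp add: Finite_Cartesian_Product.vec_eq_iff)
  finally show ?thesis by (simp add: Cm_def)
qed

section \<open>Values of integer-valued polynomials\<close>

text \<open>If f \<in> Int_K(M_n(D)) and p \<in> D[x] is monic of degree n, then f mod p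
  has coefficients in D: they form the first column of f(Cm) \<in> M_n(D), where Cm is the
  companion matrix of p.\<close>

lemma Int_mat_mod_monic_integral:
  fixes p :: "'a::idom poly"
  assumes f: "f \<in> Int_mat TYPE('n::finite)"
    and deg: "degree p = CARD('n)" and monic: "coeff p CARD('n) = 1"
  shows "\<exists>r0. f mod map_poly to_fract p = map_poly to_fract r0"
proof -
  define n where "n = CARD('n)"
  obtain idx :: "'n \<Rightarrow> nat" where idx: "bij_betw idx UNIV {..<n}"
    using index_enumeration n_def by blast
  have idx_less: "idx x < n" for x using idx by (auto simp: bij_betw_def)
  define pK where "pK = map_poly to_fract p"
  define r where "r = f mod pK"
  have deg_pK: "degree pK = n"
    using deg monic unfolding pK_def n_def by (subst degree_map_poly) auto
  have "pK \<noteq> 0" using deg_pK n_def by auto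
  then have r_deg: "degree r < n"
    using degree_mod_less'[of pK f] deg_pK n_def by (cases "r = 0") (auto simp: r_def)
  define Cm :: "'a^'n^'n" where "Cm = companion_mat idx p"
  define e0 :: "'a fract^'n" where "e0 = basis_vec idx 0"
  obtain M where M: "poly_mat f (mat_to_fract Cm) = mat_to_fract M"
    using f unfolding Int_mat_def by blast
  have e0: "e0 = vec_to_fract (basis_vec idx 0)"
    by (simp add: e0_def vec_to_fract_basis_vec)
  have "poly_mat pK (mat_to_fract Cm) *v e0 = vec_to_fract (poly_mat p Cm *v basis_vec idx 0)"
    by (simp only: e0 pK_def poly_mat_to_fract mat_to_fract_mulv)
  then have pK_e0: "poly_mat pK (mat_to_fract Cm) *v e0 = 0"
    using companion_mat_annihilates[OF idx[unfolded n_def] deg monic]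
    by (simp add: Cm_def vec_to_fract_def Finite_Cartesian_Product.vec_eq_iff)
  have powers: "mat_pow (mat_to_fract Cm) k *v e0 = basis_vec idx k" if "k < n" for k
  proof -
    have "mat_pow (mat_to_fract Cm) k *v e0 = vec_to_fract (mat_pow Cm k *v basis_vec idx 0)"
      by (simp only: e0 mat_to_fract_pow[symmetric] mat_to_fract_mulv)
    also have "\<dots> = vec_to_fract (basis_vec idx k)"
      using companion_mat_powers[OF idx[unfolded n_def], of k p] that by (simp add: Cm_def n_def)
    finally show ?thesis by (simp only: vec_to_fract_basis_vec)
  qed
  have "vec_to_fract (M *v basis_vec idx 0) = poly_mat f (mat_to_fract Cm) *v e0"
    by (simp only: M e0 mat_to_fract_mulv)
  also have "\<dots> = poly_mat r (mat_to_fract Cm) *v e0"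
    by (simp add: poly_mat_div_mod[of f _ pK] r_def matrix_vector_mult_add_rdistrib
        matrix_vector_mul_assoc[symmetric] pK_e0)
  also have "\<dots> = (\<Sum>k<n. coeff r k *s (mat_pow (mat_to_fract Cm) k *v e0))"
    by (rule poly_mat_mulv[OF r_deg])
  also have "\<dots> = (\<Sum>k<n. coeff r k *s basis_vec idx k)"
    by (rule sum.cong) (simp_all add: powers)
  also have "\<dots> = (\<chi> x. coeff r (idx x))"
    using idx_less by (rule basis_vec_combination)
  finally have column: "coeff r (idx x) = to_fract ((M *v basis_vec idx 0) $ x)" for x
    by (simp add: Finite_Cartesian_Product.vec_eq_iff vec_to_fract_def)
  have "coeff r k \<in> range to_fract" for k
  proof (cases "k < n")
    case True
    then obtain x where "idx x = k" using enumeration_hits[OF idx] by blast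
    then show ?thesis using column[of x] by auto
  next
    case False
    then show ?thesis using r_deg by (simp add: coeff_eq_0 image_iff exI[of _ 0])
  qed
  then show ?thesis using poly_from_integral_coeffs unfolding r_def pK_def by blast
qed

text \<open>Every value f(C) of f \<in> Int_K(M_n(D)) lies in D[C]: reduce f modulo the
  characteristic polynomial of C.\<close>

lemma Int_mat_value_in_D_C:
  fixes C :: "('a::idom)^('n::finite)^'n"
  assumes f: "f \<in> Int_mat TYPE('n)"
  shows "\<exists>g :: 'a poly. poly_mat f (mat_to_fract C) = mat_to_fract (poly_mat g C)"
proof -
  obtain p :: "'a poly" where deg: "degree p = CARD('n)" and monic: "coeff p CARD('n) = 1"
    and CH: "poly_mat p C = 0"
    using cayley_hamilton[of C] by blast
  obtain r0 where r0: "f mod map_poly to_fract p = map_poly to_fract r0"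
    using Int_mat_mod_monic_integral[OF f deg monic] by blast
  have "poly_mat (map_poly to_fract p) (mat_to_fract C) = 0"
    by (simp add: poly_mat_to_fract CH)
  then have "poly_mat f (mat_to_fract C) = poly_mat (map_poly to_fract r0) (mat_to_fract C)"
    by (simp add: poly_mat_div_mod[of f _ "map_poly to_fract p"] r0)
  then show ?thesis by (auto simp: poly_mat_to_fract)
qed

theorem mainTheorem3:
  fixes C :: "('a::idom)^('n::finite)^'n"
  shows "{poly_mat f (mat_to_fract C) | f. f \<in> Int_mat TYPE('n)}
         = mat_to_fract ` {poly_mat g C | g :: 'a poly. True}"
proof
  show "{poly_mat f (mat_to_fract C) | f. f \<in> Int_mat TYPE('n)}
      \<subseteq> mat_to_fract ` {poly_mat g C | g :: 'a poly. True}"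
    using Int_mat_value_in_D_C[of _ C] by blast
  show "mat_to_fract ` {poly_mat g C | g :: 'a poly. True}
      \<subseteq> {poly_mat f (mat_to_fract C) | f. f \<in> Int_mat TYPE('n)}"
  proof
    fix X assume "X \<in> mat_to_fract ` {poly_mat g C | g :: 'a poly. True}"
    then obtain g :: "'a poly" where "X = mat_to_fract (poly_mat g C)" by blast
    then have "X = poly_mat (map_poly to_fract g) (mat_to_fract C)" by (simp add: poly_mat_to_fract)
    then show "X \<in> {poly_mat f (mat_to_fract C) | f. f \<in> Int_mat TYPE('n)}"
      using map_to_fract_in_Int_mat by blast
  qed
qed

end
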